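(* Let $x\in\mathbb{R}$, written as $x=k+\sum_{n=1}^\infty a_n2^{-n}$ with $k\in\mathbb{Z}$ and $a_n\in\{0,1\}$. (1) If $x\in D$, then $\partial^+T(x)=\varnothing$. (2) If $x\notin D$ and there exists an integer $m\ge1$ such that $a_n+a_{n+1}=1$ for all $n\ge m$, then $$\partial^+T(x)=\begin{cases} m-1-2\sum_{j=1}^{m-1}a_j+[0,1] & \text{if } a_m=0,\\ m-1-2\sum_{j=1}^{m-1}a_j+[-1,0] & \text{if } a_m=1.\end{cases}$$ (3) If $x\notin D$ does not satisfy the hypothesis of (2), but there exists $m\ge1$ such that $a_{m+2i}+a_{m+2i+1}=1$ for all $i\ge0$, then $$\partial^+T(x)=\Big\{m-1-2\sum_{j=1}^{m-1}a_j\Big\}.$$ (4) If $x\notin D$ satisfies neither the hypothesis of (2) nor that of (3), then $\partial^+T(x)=\varnothing$.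
   Context: Let $\phi(x)=\operatorname{dist}(x,\mathbb{Z})$ and $T(x)=\sum_{n=0}^\infty 2^{-n}\phi(2^nx)$ be the Takagi function. $D$ denotes the set of dyadic rationals $\{k/2^{j}:k\in\mathbb{Z},j\ge0\}$; for $x\notin D$ the binary expansion is unique. The Fréchet superdifferential of an upper semicontinuous $f:\mathbb{R}\to\mathbb{R}$ at $x$ is $\partial^+f(x)=\{\xi\in\mathbb{R}: \limsup_{h\to0}\frac{f(x+h)-f(x)-\xi h}{|h|}\le0\}$. For $c\in\mathbb{R}$ and an interval $I$, $c+I=\{c+t:t\in I\}$. *)

theory Defs
  imports "HOL-Analysis.Analysis"
begin

definition phi :: "real \<Rightarrow> real" where
  "phi x = infdist x (\<int> :: real set)"

definition takagi :: "real \<Rightarrow> real" where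
  "takagi x = (\<Sum>n. phi (2 ^ n * x) / 2 ^ n)"

definition dyadic :: "real set" where
  "dyadic = {x. \<exists>(k::int) (j::nat). x = of_int k / 2 ^ j}"

definition superdiff :: "(real \<Rightarrow> real) \<Rightarrow> real \<Rightarrow> real set" where
  "superdiff f x = {\<xi>. Limsup (at 0) (\<lambda>h. ereal ((f (x + h) - f x - \<xi> * h) / \<bar>h\<bar>)) \<le> 0}"

end

theory Submission
  imports Defs
begin

text \<open>On a dyadic interval \<open>[p / 2 ^ N, (p + 1) / 2 ^ N]\<close> the Takagi function is a linear
  function of slope \<open>takagi_slope N p\<close> plus a copy of itself scaled by \<open>2 ^ - N\<close>. Writing
  \<open>x = (p\<^sub>N + y\<^sub>N) / 2 ^ N\<close> with \<open>p\<^sub>N\<close> the integer formed by the first \<open>N\<close> binary digits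
  and \<open>y\<^sub>N\<close> the tail, reflecting the tail to \<open>1 - y\<^sub>N\<close> leaves the scaled copy unchanged, so
  \<open>takagi\<close> has a chord of slope exactly \<open>s\<^sub>N = takagi_slope N p\<^sub>N\<close> issuing from \<open>x\<close>, to the
  right if the next digit is 0 and to the left if it is 1. Hence a supergradient \<open>\<xi>\<close> satisfies,
  up to an error tending to 0, \<open>s\<^sub>N \<le> \<xi>\<close> when the next digit is 0 and \<open>\<xi> \<le> s\<^sub>N\<close>
  when it is 1. Conversely, if
  \<open>takagi y\<^sub>N = 2/3\<close>, its maximum, which happens when the digits after position \<open>N\<close> come in
  complementary pairs, then \<open>x\<close> is a local maximum of \<open>takagi - s\<^sub>N * id\<close>. The four cases
  differ in which slopes recur with which next digit. At a dyadic point \<open>p / 2 ^ J\<close> the right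
  chords of length \<open>2 ^ - (J + i)\<close> have the unbounded slopes \<open>s\<^sub>J + i\<close>.\<close>

section \<open>The distance to the nearest integer\<close>

lemma phi_eq_min_frac: "phi x = min (frac x) (1 - frac x)"
proof (rule antisym)
  have "phi x \<le> dist x (of_int \<lfloor>x\<rfloor>)" and "phi x \<le> dist x (of_int (\<lfloor>x\<rfloor> + 1))"
    unfolding phi_def by (rule infdist_le, simp only: Ints_of_int)+
  then show "phi x \<le> min (frac x) (1 - frac x)"
    by (simp add: dist_real_def frac_def)
next
  have "min (frac x) (1 - frac x) \<le> dist x (of_int n)" for n
  proof (cases "n \<le> \<lfloor>x\<rfloor>")
    case True
    then have "real_of_int n \<le> of_int \<lfloor>x\<rfloor>" by linarith
    then show ?thesis by (simp add: dist_real_def frac_def)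
  next
    case False
    then have "real_of_int n \<ge> of_int \<lfloor>x\<rfloor> + 1" by linarith
    then show ?thesis by (simp add: dist_real_def frac_def)
  qed
  then show "min (frac x) (1 - frac x) \<le> phi x"
    unfolding phi_def by (subst infdist_notempty) (auto intro!: cINF_greatest elim!: Ints_cases)
qed

lemma phi_nonneg: "0 \<le> phi x" and phi_le_half: "phi x \<le> 1/2"
  using frac_ge_0[of x] frac_lt_1[of x] by (auto simp: phi_eq_min_frac min_def)

lemma phi_add_of_int: "phi (x + of_int n) = phi x"
  by (simp add: phi_eq_min_frac)

lemma phi_minus: "phi (- x) = phi x"
proof (cases "x \<in> \<int>")
  case True
  then have "frac x = 0" "frac (- x) = 0" by simp_all
  then show ?thesis by (simp only: phi_eq_min_frac)
qed (simp add: phi_eq_min_frac frac_neg)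

lemma phi_eq_self: "0 \<le> s \<Longrightarrow> s \<le> 1/2 \<Longrightarrow> phi s = s"
  by (simp add: phi_eq_min_frac frac_eq)

lemma phi_eq_one_minus: "1/2 \<le> s \<Longrightarrow> s \<le> 1 \<Longrightarrow> phi s = 1 - s"
  by (cases "s = 1") (simp_all add: phi_eq_min_frac frac_eq)

lemma phi_double_eq: "phi (2 * s) = phi (2 * s - 1)"
  using phi_add_of_int[of "2 * s - 1" 1] by simp

lemma phi_add_half_phi_double_le: "phi y + phi (2 * y) / 2 \<le> 1/2"
proof -
  define f where "f = frac y"
  have f: "0 \<le> f" "f < 1" by (auto simp: f_def frac_lt_1)
  have y: "y = f + of_int \<lfloor>y\<rfloor>" and y2: "2 * y = 2 * f + of_int (2 * \<lfloor>y\<rfloor>)"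
    by (simp_all add: f_def frac_def)
  have "phi f + phi (2 * f) / 2 \<le> 1/2"
    using f phi_double_eq[of f]
    by (cases "f \<le> 1/4"; cases "f \<le> 1/2"; cases "f \<le> 3/4")
       (simp_all add: phi_eq_self phi_eq_one_minus field_simps)
  moreover have "phi y = phi f" "phi (2 * y) = phi (2 * f)"
    by (subst y, rule phi_add_of_int, subst y2, rule phi_add_of_int)
  ultimately show ?thesis by simp
qed

lemma phi_add_half_phi_double_eq: "1/4 \<le> y \<Longrightarrow> y \<le> 3/4 \<Longrightarrow> phi y + phi (2 * y) / 2 = 1/2"
  using phi_double_eq[of y] by (cases "y \<le> 1/2") (simp_all add: phi_eq_self phi_eq_one_minus field_simps)

lemma summable_takagi: "summable (\<lambda>n. phi (2 ^ n * x) / 2 ^ n)"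
proof (rule summable_comparison_test')
  show "summable (\<lambda>n. (1/2::real) ^ n)" by simp
  show "norm (phi (2 ^ n * x) / 2 ^ n) \<le> (1/2) ^ n" for n
    using phi_nonneg[of "2 ^ n * x"] phi_le_half[of "2 ^ n * x"]
    by (simp add: power_divide divide_right_mono)
qed

lemma takagi_functional_eq: "takagi x = phi x + takagi (2 * x) / 2"
proof -
  have "takagi x = phi x + (\<Sum>n. phi (2 ^ Suc n * x) / 2 ^ Suc n)"
    unfolding takagi_def using suminf_split_head[OF summable_takagi[of x]] by simp
  also have "(\<lambda>n. phi (2 ^ Suc n * x) / 2 ^ Suc n) = (\<lambda>n. (phi (2 ^ n * (2 * x)) / 2 ^ n) / 2)"
    by (simp add: mult.assoc mult.commute)
  also have "(\<Sum>n. (phi (2 ^ n * (2 * x)) / 2 ^ n) / 2) = takagi (2 * x) / 2"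
    unfolding takagi_def by (rule suminf_divide[OF summable_takagi])
  finally show ?thesis .
qed

lemma takagi_functional_eq2: "takagi x = phi x + phi (2 * x) / 2 + takagi (4 * x) / 4"
  using takagi_functional_eq[of x] takagi_functional_eq[of "2 * x"] by simp

lemma takagi_nonneg: "0 \<le> takagi x"
  unfolding takagi_def by (rule suminf_nonneg[OF summable_takagi]) (simp add: phi_nonneg)

lemma takagi_le_one: "takagi x \<le> 1"
proof -
  have "takagi x \<le> (\<Sum>n. (1/2::real) ^ Suc n)"
    unfolding takagi_def
  proof (rule suminf_le[OF _ summable_takagi])
    show "summable (\<lambda>n. (1/2::real) ^ Suc n)" by simp
    show "phi (2 ^ n * x) / 2 ^ n \<le> (1/2::real) ^ Suc n" for n
      using divide_right_mono[OF phi_le_half[of "2 ^ n * x"], of "2 ^ n"] by (simp add: power_divide)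
  qed
  also have "\<dots> = 1" using power_half_series sums_unique by metis
  finally show ?thesis .
qed

lemma takagi_add_of_int: "takagi (x + of_int m) = takagi x"
proof -
  have "2 ^ n * (x + of_int m) = 2 ^ n * x + of_int (2 ^ n * m)" for n :: nat
    by (simp add: algebra_simps)
  then show ?thesis unfolding takagi_def by (simp only: phi_add_of_int)
qed

lemma takagi_add_of_nat: "takagi (x + of_nat m) = takagi x"
  using takagi_add_of_int[of x "int m"] by simp

lemma takagi_of_int: "takagi (of_int m) = 0"
  using takagi_add_of_int[of 0 m] by (simp add: takagi_def phi_eq_min_frac)

lemma takagi_one_minus: "takagi (1 - x) = takagi x"
proof -
  have "takagi (- x) = takagi x"
    unfolding takagi_def by (simp add: phi_minus[of "2 ^ _ * x", symmetric])
  then show ?thesis using takagi_add_of_int[of "- x" 1] by simp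
qed

lemma contraction_nonpos:
  fixes u :: "'a \<Rightarrow> real" and g :: "'a \<Rightarrow> 'a"
  assumes bounded: "\<And>y. P y \<Longrightarrow> u y \<le> B"
    and contract: "\<And>y. P y \<Longrightarrow> P (g y) \<and> u y \<le> c * u (g y)"
    and c: "0 \<le> c" "c < 1" and "P y"
  shows "u y \<le> 0"
proof -
  have bound: "u y \<le> B * c ^ n" if "P y" for y n
    using that
  proof (induction n arbitrary: y)
    case (Suc n)
    then have "u y \<le> c * u (g y)" "u (g y) \<le> B * c ^ n" using contract by blast+
    then show ?case using c(1) mult_left_mono[of "u (g y)" "B * c ^ n" c] by (simp add: ac_simps)
  qed (simp add: bounded)
  have "(\<lambda>n. B * c ^ n) \<longlonglongrightarrow> 0"
    using c by (intro tendsto_mult_right_zero LIMSEQ_power_zero) simp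
  then show ?thesis by (rule LIMSEQ_le_const) (use bound[OF \<open>P y\<close>] in auto)
qed

lemma takagi_le_two_thirds: "takagi x \<le> 2/3"
proof -
  have "takagi y - 2/3 \<le> 1/4 * (takagi (4 * y) - 2/3)" for y
    using takagi_functional_eq2[of y] phi_add_half_phi_double_le[of y] by simp
  then have "takagi x - 2/3 \<le> 0"
    by (intro contraction_nonpos[where u = "\<lambda>y. takagi y - 2/3" and P = "\<lambda>_. True"
          and g = "\<lambda>y. 4 * y" and c = "1/4" and B = "1/3"])
      (auto simp: takagi_le_one)
  then show ?thesis by simp
qed

section \<open>Self-similarity on dyadic intervals\<close>

text \<open>The slope of the partial sum \<open>\<Sum>n<N. phi (2 ^ n * x) / 2 ^ n\<close> on the dyadic interval
  \<open>[p / 2 ^ N, (p + 1) / 2 ^ N]\<close>.\<close>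
fun takagi_slope :: "nat \<Rightarrow> int \<Rightarrow> int" where
  "takagi_slope 0 p = 0"
| "takagi_slope (Suc N) p = takagi_slope N (p div 2) + 1 - 2 * (p mod 2)"

lemma takagi_half_interval:
  assumes "b = 0 \<or> b = 1" "0 \<le> z" "z \<le> 1"
  shows "takagi ((b + z) / 2) - takagi (b / 2) = (1 - 2 * b) * z / 2 + takagi z / 2"
  using assms(1)
proof
  assume "b = 0"
  then show ?thesis
    using takagi_functional_eq[of "z / 2"] phi_eq_self[of "z / 2"] takagi_of_int[of 0] assms
    by simp
next
  assume "b = 1"
  have "2 * ((1 + z) / 2) = z + of_int 1" by simp
  then have "takagi ((1 + z) / 2) = 1 - (1 + z) / 2 + takagi z / 2"
    using takagi_functional_eq[of "(1 + z) / 2"] phi_eq_one_minus[of "(1 + z) / 2"] assms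
    by (simp only: takagi_add_of_int)
  moreover have "takagi (1/2) = 1/2"
    using takagi_functional_eq[of "1/2"] phi_eq_self[of "1/2"] takagi_of_int[of 1] by simp
  ultimately show ?thesis using \<open>b = 1\<close> by (simp add: field_simps)
qed

theorem takagi_dyadic_selfsimilar:
  assumes "0 \<le> z" "z \<le> 1"
  shows "takagi ((of_int p + z) / 2 ^ N)
    = takagi (of_int p / 2 ^ N) + of_int (takagi_slope N p) * z / 2 ^ N + takagi z / 2 ^ N"
  using assms
proof (induction N arbitrary: p z)
  case 0
  show ?case using takagi_add_of_int[of z p] takagi_of_int[of p] by (simp add: add.commute)
next
  case (Suc N)
  define q b where "q = p div 2" and "b = p mod 2"
  have b: "b = 0 \<or> b = 1" by (auto simp: b_def)
  define w where "w = (of_int b + z) / 2"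
  have w: "0 \<le> w" "w \<le> 1" using b Suc.prems by (auto simp: w_def)
  have "p = 2 * q + b" by (simp add: q_def b_def)
  then have p: "(of_int p + z) / 2 ^ Suc N = (of_int q + w) / 2 ^ N"
    "(of_int p :: real) / 2 ^ Suc N = (of_int q + of_int b / 2) / 2 ^ N"
    by (simp_all add: w_def field_simps)
  have IH: "takagi ((of_int q + w) / 2 ^ N)
      = takagi (of_int q / 2 ^ N) + of_int (takagi_slope N q) * w / 2 ^ N + takagi w / 2 ^ N"
    "takagi ((of_int q + of_int b / 2) / 2 ^ N)
      = takagi (of_int q / 2 ^ N) + of_int (takagi_slope N q) * (of_int b / 2) / 2 ^ N
        + takagi (of_int b / 2) / 2 ^ N"
    using Suc.IH w b takagi_of_int[of 0] by auto
  have half: "takagi w - takagi (of_int b / 2) = (1 - 2 * of_int b) * z / 2 + takagi z / 2"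
    unfolding w_def using b Suc.prems by (intro takagi_half_interval) auto
  have slope: "takagi_slope (Suc N) p = takagi_slope N q + 1 - 2 * b" by (simp add: q_def b_def)
  have "takagi ((of_int p + z) / 2 ^ Suc N) - takagi (of_int p / 2 ^ Suc N)
      = (of_int (takagi_slope N q) * (w - of_int b / 2) + (takagi w - takagi (of_int b / 2))) / 2 ^ N"
    unfolding p IH by (simp add: field_simps)
  also have "\<dots> = (of_int (takagi_slope N q) * z / 2 + (1 - 2 * of_int b) * z / 2 + takagi z / 2) / 2 ^ N"
    unfolding half by (simp add: w_def field_simps)
  also have "\<dots> = of_int (takagi_slope (Suc N) p) * z / 2 ^ Suc N + takagi z / 2 ^ Suc N"
    unfolding slope by (simp add: field_simps)
  finally show ?case by simp
qed

lemma takagi_slope_mult_power2: "takagi_slope (J + i) (p * 2 ^ i) = takagi_slope J p + int i"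
proof (induction i)
  case (Suc i)
  have "(p * 2 ^ Suc i) div 2 = p * 2 ^ i" "(p * 2 ^ Suc i) mod 2 = 0" by simp_all
  then show ?case using Suc by simp
qed simp

section \<open>Superdifferentials and the dyadic points\<close>

lemma superdiff_memI:
  assumes "0 < d" "\<And>h. h \<noteq> 0 \<Longrightarrow> \<bar>h\<bar> < d \<Longrightarrow> f (x + h) - f x \<le> \<xi> * h"
  shows "\<xi> \<in> superdiff f x"
proof -
  have "eventually (\<lambda>h. ereal ((f (x + h) - f x - \<xi> * h) / \<bar>h\<bar>) \<le> 0) (at 0)"
    unfolding eventually_at using assms
    by (intro exI[of _ d]) (auto simp: dist_real_def divide_nonpos_nonneg)
  then show ?thesis unfolding superdiff_def by (auto intro: Limsup_bounded)
qed

lemma superdiff_sequence_bound: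
  assumes "\<xi> \<in> superdiff f x" "0 < \<epsilon>" "g \<longlonglongrightarrow> 0" "\<And>n. g n \<noteq> 0"
  shows "eventually (\<lambda>n. (f (x + g n) - f x - \<xi> * g n) / \<bar>g n\<bar> < \<epsilon>) sequentially"
proof -
  have "Limsup (at 0) (\<lambda>h. ereal ((f (x + h) - f x - \<xi> * h) / \<bar>h\<bar>)) < ereal \<epsilon>"
    using assms(1,2) unfolding superdiff_def by (auto intro: le_less_trans)
  then have "eventually (\<lambda>h. ereal ((f (x + h) - f x - \<xi> * h) / \<bar>h\<bar>) < ereal \<epsilon>) (at 0)"
    by (rule Limsup_lessD)
  moreover have "filterlim g (at 0) sequentially"
    using assms(3,4) by (intro filterlim_atI) auto
  ultimately show ?thesis
    using eventually_compose_filterlim by fastforce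
qed

theorem superdiff_takagi_dyadic:
  assumes "x \<in> dyadic"
  shows "superdiff takagi x = {}"
proof (rule ccontr)
  assume "superdiff takagi x \<noteq> {}"
  then obtain \<xi> where \<xi>: "\<xi> \<in> superdiff takagi x" by auto
  obtain p :: int and J :: nat where x: "x = of_int p / 2 ^ J"
    using assms unfolding dyadic_def by auto
  define g :: "nat \<Rightarrow> real" where "g = (\<lambda>i. (1/2) ^ (J + i))"
  have g: "g i > 0" and g_nz: "g i \<noteq> 0" for i by (simp_all add: g_def)
  have lim: "g \<longlonglongrightarrow> 0"
    using LIMSEQ_ignore_initial_segment[OF LIMSEQ_power_zero[of "1/2::real"], of J]
    by (simp add: g_def add.commute)
  obtain i0 where
    i0: "\<And>i. i \<ge> i0 \<Longrightarrow> (takagi (x + g i) - takagi x - \<xi> * g i) / \<bar>g i\<bar> < 1"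
    using superdiff_sequence_bound[OF \<xi> zero_less_one lim g_nz]
    unfolding eventually_sequentially by blast
  have "(takagi (x + g i) - takagi x - \<xi> * g i) / \<bar>g i\<bar> = of_int (takagi_slope J p) + i - \<xi>"
    for i
  proof -
    have "x = of_int (p * 2 ^ i) / 2 ^ (J + i)" and "x + g i = (of_int (p * 2 ^ i) + 1) / 2 ^ (J + i)"
      by (simp_all add: x g_def power_add field_simps)
    then have "takagi (x + g i) - takagi x = of_int (takagi_slope (J + i) (p * 2 ^ i)) * g i"
      using takagi_dyadic_selfsimilar[of 1 "p * 2 ^ i" "J + i"] takagi_of_int[of 1]
      by (simp add: g_def power_divide)
    then show ?thesis using g[of i] by (simp add: takagi_slope_mult_power2 field_simps)
  qed
  moreover obtain n :: nat where "\<xi> - of_int (takagi_slope J p) + 1 \<le> n"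
    using real_arch_simple by blast
  ultimately show False using i0[of "max i0 n"] by (simp add: of_nat_max)
qed

section \<open>Binary expansions\<close>

fun bin_prefix :: "(nat \<Rightarrow> nat) \<Rightarrow> int \<Rightarrow> nat \<Rightarrow> int" where
  "bin_prefix a k 0 = k"
| "bin_prefix a k (Suc N) = 2 * bin_prefix a k N + int (a (Suc N))"

definition bin_tail :: "(nat \<Rightarrow> nat) \<Rightarrow> nat \<Rightarrow> real" where
  "bin_tail a N = (\<Sum>n. real (a (N + n + 1)) / 2 ^ (n + 1))"

definition complementary_pairs :: "(nat \<Rightarrow> nat) \<Rightarrow> nat \<Rightarrow> bool" where
  "complementary_pairs a N \<longleftrightarrow> (\<forall>i. a (N + 2 * i + 1) + a (N + 2 * i + 2) = 1)"

lemma complementary_pairs_Suc_Suc: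
  "complementary_pairs a N \<longleftrightarrow> a (N + 1) + a (N + 2) = 1 \<and> complementary_pairs a (Suc (Suc N))"
proof -
  have shift: "Suc (Suc N) + 2 * i + j = N + 2 * Suc i + j" for i j by simp
  have "(\<forall>i. P i) \<longleftrightarrow> P 0 \<and> (\<forall>i. P (Suc i))" for P :: "nat \<Rightarrow> bool"
    by (metis not0_implies_Suc)
  from this[of "\<lambda>i. a (N + 2 * i + 1) + a (N + 2 * i + 2) = 1"] show ?thesis
    unfolding complementary_pairs_def shift by simp
qed

lemma alternating_iff_complementary_pairs:
  "(\<forall>n\<ge>Suc N. a n + a (Suc n) = 1) \<longleftrightarrow> complementary_pairs a N \<and> complementary_pairs a (Suc N)"
proof
  assume "\<forall>n\<ge>Suc N. a n + a (Suc n) = 1"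
  then show "complementary_pairs a N \<and> complementary_pairs a (Suc N)"
    unfolding complementary_pairs_def by simp
next
  assume pairs: "complementary_pairs a N \<and> complementary_pairs a (Suc N)"
  show "\<forall>n\<ge>Suc N. a n + a (Suc n) = 1"
  proof (intro allI impI)
    fix n assume "n \<ge> Suc N"
    define i where "i = (n - N - 1) div 2"
    have "n = N + 2 * i + 1 \<or> n = N + 2 * i + 2" using \<open>n \<ge> Suc N\<close> by (auto simp: i_def)
    then show "a n + a (Suc n) = 1"
      using pairs unfolding complementary_pairs_def by auto
  qed
qed

locale binary_expansion =
  fixes x :: real and k :: int and a :: "nat \<Rightarrow> nat"
  assumes digits: "\<forall>n\<ge>1. a n \<in> {0, 1}"
    and expansion: "x = of_int k + (\<Sum>n. real (a (Suc n)) / 2 ^ Suc n)"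
begin

abbreviation slope :: "nat \<Rightarrow> int" where
  "slope N \<equiv> takagi_slope N (bin_prefix a k N)"

lemma digit_cases: "a (Suc n) = 0 \<or> a (Suc n) = 1"
  using digits by auto

lemma bin_tail_term_le: "real (a (N + n + 1)) / 2 ^ (n + 1) \<le> (1/2) ^ Suc n"
proof -
  have "real (a (N + n + 1)) \<le> 1" using digit_cases[of "N + n"] by auto
  then show ?thesis by (simp add: power_divide divide_right_mono)
qed

lemma summable_bin_tail: "summable (\<lambda>n. real (a (N + n + 1)) / 2 ^ (n + 1))"
  by (rule summable_comparison_test'[of "\<lambda>n. (1/2::real) ^ Suc n"])
    (use bin_tail_term_le in auto)

lemma bin_tail_le_one: "bin_tail a N \<le> 1"
proof -
  have "bin_tail a N \<le> (\<Sum>n. (1/2::real) ^ Suc n)"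
    unfolding bin_tail_def by (rule suminf_le) (use bin_tail_term_le summable_bin_tail in auto)
  also have "\<dots> = 1" using power_half_series sums_unique by metis
  finally show ?thesis .
qed

lemma bin_tail_nonneg: "0 \<le> bin_tail a N"
  unfolding bin_tail_def by (rule suminf_nonneg[OF summable_bin_tail]) simp

lemma bin_tail_Suc: "bin_tail a N = (real (a (Suc N)) + bin_tail a (Suc N)) / 2"
proof -
  have "bin_tail a N = real (a (Suc N)) / 2 + (\<Sum>n. real (a (N + Suc n + 1)) / 2 ^ (Suc n + 1))"
    unfolding bin_tail_def using suminf_split_head[OF summable_bin_tail[of N]] by simp
  also have "(\<lambda>n. real (a (N + Suc n + 1)) / 2 ^ (Suc n + 1))
      = (\<lambda>n. (real (a (Suc N + n + 1)) / 2 ^ (n + 1)) / 2)"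
    by (simp add: algebra_simps)
  also have "(\<Sum>n. (real (a (Suc N + n + 1)) / 2 ^ (n + 1)) / 2) = bin_tail a (Suc N) / 2"
    unfolding bin_tail_def by (rule suminf_divide[OF summable_bin_tail])
  finally show ?thesis by simp
qed

lemma x_eq_prefix_tail: "x = (of_int (bin_prefix a k N) + bin_tail a N) / 2 ^ N"
proof (induction N)
  case 0
  show ?case using expansion by (simp add: bin_tail_def)
next
  case (Suc N)
  then show ?case using bin_tail_Suc[of N] by (simp add: field_simps)
qed

lemma slope_Suc: "slope (Suc N) = slope N + 1 - 2 * int (a (Suc N))"
proof -
  have "bin_prefix a k (Suc N) div 2 = bin_prefix a k N"
    and "bin_prefix a k (Suc N) mod 2 = int (a (Suc N))"
    using digit_cases[of N] by auto
  then show ?thesis by (simp del: bin_prefix.simps)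
qed

lemma slope_eq_digit_sum: "slope N = int N - 2 * (\<Sum>j=1..N. int (a j))"
proof (induction N)
  case (Suc N)
  then show ?case unfolding slope_Suc by simp
qed simp

lemma slope_complementary_pairs:
  assumes "complementary_pairs a N"
  shows "slope (N + 2 * i) = slope N"
  using assms
proof (induction i arbitrary: N)
  case (Suc i)
  have pair: "a (N + 1) + a (N + 2) = 1" and cp: "complementary_pairs a (Suc (Suc N))"
    using complementary_pairs_Suc_Suc[THEN iffD1, OF Suc.prems] by simp_all
  have "slope (Suc (Suc N) + 2 * i) = slope (Suc (Suc N))" using cp by (rule Suc.IH)
  also have "slope (Suc (Suc N)) = slope N"
    unfolding slope_Suc using pair by simp
  finally show ?case by (simp add: algebra_simps)
qed simp

lemma bin_tail_bounds:
  assumes "x \<notin> dyadic"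
  shows "0 < bin_tail a N" "bin_tail a N < 1" "bin_tail a N \<noteq> 1/2"
proof -
  have x: "x = (of_int (bin_prefix a k N) + bin_tail a N) / 2 ^ N" by (rule x_eq_prefix_tail)
  have ne: "x \<noteq> of_int p / 2 ^ J" for p J using assms unfolding dyadic_def by blast
  have "bin_tail a N \<noteq> 0"
    using ne[of "bin_prefix a k N" N] x by auto
  moreover have "bin_tail a N \<noteq> 1"
    using ne[of "bin_prefix a k N + 1" N] x by auto
  moreover have "bin_tail a N \<noteq> 1/2"
  proof
    assume "bin_tail a N = 1/2"
    then have "x = of_int (2 * bin_prefix a k N + 1) / 2 ^ Suc N" using x by (simp add: field_simps)
    then show False using ne by blast
  qed
  ultimately show "0 < bin_tail a N" "bin_tail a N < 1" "bin_tail a N \<noteq> 1/2"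
    using bin_tail_nonneg[of N] bin_tail_le_one[of N] by auto
qed

lemma bin_tail_lt_half_iff:
  assumes "x \<notin> dyadic"
  shows "bin_tail a N < 1/2 \<longleftrightarrow> a (Suc N) = 0"
  using bin_tail_Suc[of N] bin_tail_bounds[OF assms, of "Suc N"] digit_cases[of N] by auto

end

section \<open>The superdifferential at non-dyadic points\<close>

lemma unit_walk_trapped:
  fixes s :: "nat \<Rightarrow> int"
  assumes unit: "\<And>n. \<bar>s (Suc n) - s n\<bar> = 1"
    and up: "\<And>n. n \<ge> N0 \<Longrightarrow> s n < K \<Longrightarrow> s (Suc n) = s n + 1"
    and down: "\<And>n. n \<ge> N0 \<Longrightarrow> s n > K \<Longrightarrow> s (Suc n) = s n - 1"
  shows "\<exists>N\<ge>N0. \<forall>i. s (N + 2 * i) = K"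
proof -
  have reach: "\<exists>N\<ge>n. s N = K" if "n \<ge> N0" "\<bar>s n - K\<bar> \<le> int d" for n d
    using that
  proof (induction d arbitrary: n)
    case (Suc d)
    consider "s n = K" | "s n < K" | "s n > K" by linarith
    then show ?case
    proof cases
      case 2
      then obtain N where "N \<ge> Suc n" "s N = K"
        using Suc.IH[of "Suc n"] Suc.prems up[of n] by auto
      then show ?thesis using Suc_leD by blast
    next
      case 3
      then obtain N where "N \<ge> Suc n" "s N = K"
        using Suc.IH[of "Suc n"] Suc.prems down[of n] by auto
      then show ?thesis using Suc_leD by blast
    qed auto
  qed auto
  obtain N where N: "N \<ge> N0" "s N = K"
    using reach[of N0 "nat \<bar>s N0 - K\<bar>"] by auto
  have "s (N + 2 * i) = K" for i
  proof (induction i)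
    case (Suc i)
    define n where "n = N + 2 * i"
    have "s (Suc n) \<noteq> K" using unit[of n] Suc.IH by (auto simp: n_def)
    then have "s (Suc (Suc n)) = K"
      using up[of "Suc n"] down[of "Suc n"] unit[of n] Suc.IH N(1) by (fastforce simp: n_def)
    then show ?case by (simp add: n_def)
  qed (use N in simp)
  then show ?thesis using N by blast
qed

lemma eventually_sequentially_ge_one: "(\<exists>m\<ge>1. \<forall>n\<ge>m. P n) \<longleftrightarrow> eventually P sequentially"
proof
  assume "\<exists>m\<ge>1. \<forall>n\<ge>m. P n"
  then show "eventually P sequentially" by (auto simp: eventually_sequentially)
next
  assume "eventually P sequentially"
  then obtain m where "\<forall>n\<ge>m. P n" by (auto simp: eventually_sequentially)
  then show "\<exists>m\<ge>1. \<forall>n\<ge>m. P n" by (intro exI[of _ "Suc m"]) auto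
qed

context binary_expansion
begin

lemma takagi_near_x:
  assumes "0 \<le> z" "z \<le> 1"
  shows "takagi ((of_int (bin_prefix a k N) + z) / 2 ^ N) - takagi x
    = of_int (slope N) * (z - bin_tail a N) / 2 ^ N + (takagi z - takagi (bin_tail a N)) / 2 ^ N"
proof -
  have "takagi x = takagi ((of_int (bin_prefix a k N) + bin_tail a N) / 2 ^ N)"
    using x_eq_prefix_tail[of N] by simp
  then show ?thesis
    using takagi_dyadic_selfsimilar[OF assms, of "bin_prefix a k N" N]
      takagi_dyadic_selfsimilar[OF bin_tail_nonneg bin_tail_le_one, of "bin_prefix a k N" N]
    by (simp add: diff_divide_distrib algebra_simps)
qed

text \<open>Reflecting the tail \<open>y \<mapsto> 1 - y\<close> inside the dyadic interval of level \<open>N\<close> preserves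
  \<open>takagi y\<close>, so this increment of \<open>takagi\<close> is exactly linear.\<close>
lemma takagi_reflected_increment:
  "takagi (x + (1 - 2 * bin_tail a N) / 2 ^ N) - takagi x
    = of_int (slope N) * ((1 - 2 * bin_tail a N) / 2 ^ N)"
proof -
  have "x + (1 - 2 * bin_tail a N) / 2 ^ N = (of_int (bin_prefix a k N) + (1 - bin_tail a N)) / 2 ^ N"
    using x_eq_prefix_tail[of N] by (simp add: field_simps)
  then show ?thesis
    using takagi_near_x[of "1 - bin_tail a N" N] bin_tail_nonneg[of N] bin_tail_le_one[of N]
      takagi_one_minus[of "bin_tail a N"]
    by (simp add: field_simps)
qed

lemma takagi_bin_tail_Suc_Suc:
  assumes "a (N + 1) + a (N + 2) = 1"
  shows "takagi (bin_tail a N) = 1/2 + takagi (bin_tail a (Suc (Suc N))) / 4"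
proof -
  have y: "4 * bin_tail a N = bin_tail a (Suc (Suc N)) + real (2 * a (N + 1) + a (N + 2))"
    using bin_tail_Suc[of N] bin_tail_Suc[of "Suc N"] by (simp add: field_simps)
  have bounds: "1/4 \<le> bin_tail a N" "bin_tail a N \<le> 3/4"
    using assms y bin_tail_nonneg[of "Suc (Suc N)"] bin_tail_le_one[of "Suc (Suc N)"]
      digit_cases[of N] digit_cases[of "Suc N"]
    by auto
  have "takagi (4 * bin_tail a N) = takagi (bin_tail a (Suc (Suc N)))"
    unfolding y by (rule takagi_add_of_nat)
  then show ?thesis
    using takagi_functional_eq2[of "bin_tail a N"] phi_add_half_phi_double_eq[OF bounds] by simp
qed

lemma takagi_bin_tail_complementary_pairs:
  assumes "complementary_pairs a N"
  shows "takagi (bin_tail a N) = 2/3"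
proof -
  have "\<bar>takagi (bin_tail a M) - 2/3\<bar> = 1/4 * \<bar>takagi (bin_tail a (Suc (Suc M))) - 2/3\<bar>"
    if "complementary_pairs a M" for M
  proof -
    have eq: "takagi (bin_tail a M) - 2/3 = 1/4 * (takagi (bin_tail a (Suc (Suc M))) - 2/3)"
      using takagi_bin_tail_Suc_Suc complementary_pairs_Suc_Suc[THEN iffD1, OF that] by simp
    show ?thesis unfolding eq by (simp add: abs_mult)
  qed
  moreover have "complementary_pairs a (Suc (Suc M))" if "complementary_pairs a M" for M
    using complementary_pairs_Suc_Suc that by blast
  moreover have "\<bar>takagi y - 2/3\<bar> \<le> 1" for y
    using takagi_nonneg[of y] takagi_le_one[of y] by auto
  ultimately have "\<bar>takagi (bin_tail a N) - 2/3\<bar> \<le> 0"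
    using assms
    by (intro contraction_nonpos[where u = "\<lambda>M. \<bar>takagi (bin_tail a M) - 2/3\<bar>"
          and P = "complementary_pairs a" and g = "\<lambda>M. Suc (Suc M)" and c = "1/4" and B = 1])
      auto
  then show ?thesis by simp
qed

lemma takagi_local_max:
  assumes "takagi (bin_tail a N) = 2/3" "\<bar>h\<bar> < min (bin_tail a N) (1 - bin_tail a N) / 2 ^ N"
  shows "takagi (x + h) - takagi x \<le> of_int (slope N) * h"
proof -
  define z where "z = bin_tail a N + 2 ^ N * h"
  have "\<bar>2 ^ N * h\<bar> < min (bin_tail a N) (1 - bin_tail a N)"
    using assms(2) by (simp add: abs_mult field_simps)
  then have z: "0 \<le> z" "z \<le> 1" unfolding z_def by (auto simp: abs_less_iff)
  have "x + h = (of_int (bin_prefix a k N) + z) / 2 ^ N"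
    using x_eq_prefix_tail[of N] by (simp add: z_def field_simps)
  then have "takagi (x + h) - takagi x = of_int (slope N) * h + (takagi z - 2/3) / 2 ^ N"
    using takagi_near_x[OF z, of N] assms(1) by (simp add: z_def)
  also have "\<dots> \<le> of_int (slope N) * h"
    using takagi_le_two_thirds[of z] by (simp add: divide_nonpos_pos)
  finally show ?thesis .
qed

lemma superdiff_slope_bounds:
  assumes nd: "x \<notin> dyadic" and \<xi>: "\<xi> \<in> superdiff takagi x" and "0 < \<epsilon>"
  shows "\<forall>\<^sub>F N in sequentially. (a (Suc N) = 0 \<longrightarrow> of_int (slope N) < \<xi> + \<epsilon>)
    \<and> (a (Suc N) = 1 \<longrightarrow> \<xi> - \<epsilon> < of_int (slope N))"
proof -
  define g where "g N = (1 - 2 * bin_tail a N) / 2 ^ N" for N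
  have g_nz: "g N \<noteq> 0" for N using bin_tail_bounds(3)[OF nd, of N] by (simp add: g_def)
  have "\<bar>g N\<bar> \<le> (1/2) ^ N" for N
    using bin_tail_nonneg[of N] bin_tail_le_one[of N]
    by (simp add: g_def power_divide abs_divide divide_right_mono)
  then have "g \<longlonglongrightarrow> 0"
    by (intro Lim_null_comparison[OF always_eventually LIMSEQ_power_zero]) auto
  moreover have "(takagi (x + g N) - takagi x - \<xi> * g N) / \<bar>g N\<bar>
      = (of_int (slope N) - \<xi>) * sgn (g N)" for N
  proof -
    have "takagi (x + g N) - takagi x = of_int (slope N) * g N"
      using takagi_reflected_increment[of N] by (simp add: g_def)
    then show ?thesis by (simp add: real_sgn_eq algebra_simps diff_divide_distrib)
  qed
  ultimately have "\<forall>\<^sub>F N in sequentially. (of_int (slope N) - \<xi>) * sgn (g N) < \<epsilon>"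
    using superdiff_sequence_bound[OF \<xi> \<open>0 < \<epsilon>\<close> _ g_nz] by simp
  moreover have "g N > 0 \<longleftrightarrow> a (Suc N) = 0" for N
    using bin_tail_lt_half_iff[OF nd, of N] by (auto simp: g_def zero_less_divide_iff)
  ultimately show ?thesis
    using g_nz by (auto simp: sgn_if elim!: eventually_mono split: if_splits)
qed

lemma superdiff_ge_slope:
  assumes "x \<notin> dyadic" "\<xi> \<in> superdiff takagi x"
    and "\<exists>\<^sub>F N in sequentially. a (Suc N) = 0 \<and> slope N = d"
  shows "of_int d \<le> \<xi>"
proof (rule ccontr)
  assume "\<not> of_int d \<le> \<xi>"
  then have "\<forall>\<^sub>F N in sequentially. a (Suc N) = 0 \<longrightarrow> of_int (slope N) < \<xi> + (of_int d - \<xi>)"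
    using superdiff_slope_bounds[OF assms(1,2), of "of_int d - \<xi>"] by (auto elim: eventually_mono)
  then obtain N where "of_int (slope N) < (of_int d :: real)" "slope N = d"
    using frequently_eventually_frequently[OF assms(3)] by (auto dest: frequently_ex)
  then show False by simp
qed

lemma superdiff_le_slope:
  assumes "x \<notin> dyadic" "\<xi> \<in> superdiff takagi x"
    and "\<exists>\<^sub>F N in sequentially. a (Suc N) = 1 \<and> slope N = d"
  shows "\<xi> \<le> of_int d"
proof (rule ccontr)
  assume "\<not> \<xi> \<le> of_int d"
  then have "\<forall>\<^sub>F N in sequentially. a (Suc N) = 1 \<longrightarrow> \<xi> - (\<xi> - of_int d) < of_int (slope N)"
    using superdiff_slope_bounds[OF assms(1,2), of "\<xi> - of_int d"] by (auto elim: eventually_mono)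
  then obtain N where "(of_int d :: real) < of_int (slope N)" "slope N = d"
    using frequently_eventually_frequently[OF assms(3)] by (auto dest: frequently_ex)
  then show False by simp
qed

lemma slope_Icc_subset_superdiff:
  assumes nd: "x \<notin> dyadic"
    and max: "takagi (bin_tail a N1) = 2/3" "takagi (bin_tail a N2) = 2/3"
  shows "{of_int (slope N1) .. of_int (slope N2)} \<subseteq> superdiff takagi x"
proof
  fix \<xi> assume \<xi>: "\<xi> \<in> {of_int (slope N1) .. real_of_int (slope N2)}"
  define d where "d N = min (bin_tail a N) (1 - bin_tail a N) / 2 ^ N" for N
  have "0 < d N" for N using bin_tail_bounds[OF nd, of N] by (simp add: d_def)
  then have "0 < min (d N1) (d N2)" by simp
  then show "\<xi> \<in> superdiff takagi x"
  proof (rule superdiff_memI)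
    fix h :: real assume h: "h \<noteq> 0" "\<bar>h\<bar> < min (d N1) (d N2)"
    show "takagi (x + h) - takagi x \<le> \<xi> * h"
    proof (cases "h > 0")
      case True
      have "takagi (x + h) - takagi x \<le> of_int (slope N1) * h"
        using takagi_local_max[OF max(1), of h] h by (simp add: d_def)
      also have "\<dots> \<le> \<xi> * h" using \<xi> True by (simp add: mult_right_mono)
      finally show ?thesis .
    next
      case False
      have "takagi (x + h) - takagi x \<le> of_int (slope N2) * h"
        using takagi_local_max[OF max(2), of h] h by (simp add: d_def)
      also have "\<dots> \<le> \<xi> * h" using \<xi> False by (simp add: mult_right_mono_neg)
      finally show ?thesis .
    qed
  qed
qed

lemma superdiff_eq_slope_Icc:
  assumes "x \<notin> dyadic"
    and "takagi (bin_tail a N1) = 2/3" "takagi (bin_tail a N2) = 2/3"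
    and "\<exists>\<^sub>F N in sequentially. a (Suc N) = 0 \<and> slope N = slope N1"
    and "\<exists>\<^sub>F N in sequentially. a (Suc N) = 1 \<and> slope N = slope N2"
  shows "superdiff takagi x = {of_int (slope N1) .. of_int (slope N2)}"
  using superdiff_ge_slope[OF assms(1) _ assms(4)] superdiff_le_slope[OF assms(1) _ assms(5)]
    slope_Icc_subset_superdiff[OF assms(1-3)]
  by auto

lemma complementary_pairs_if_slope_trapped:
  assumes "\<forall>i. slope (N + 2 * i) = K"
  shows "complementary_pairs a N"
  unfolding complementary_pairs_def
proof
  fix i
  have "slope (Suc (Suc (N + 2 * i))) = slope (N + 2 * i)"
    using assms[rule_format, of i] assms[rule_format, of "Suc i"] by simp
  then show "a (N + 2 * i + 1) + a (N + 2 * i + 2) = 1"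
    unfolding slope_Suc by simp
qed

text \<open>The slopes form a walk with unit steps; a supergradient \<open>\<xi>\<close> forces it to step towards
  the integer nearest to \<open>\<xi>\<close>, so from some point on it returns to that integer every second step.\<close>
lemma complementary_pairs_if_superdiff:
  assumes nd: "x \<notin> dyadic" and \<xi>: "\<xi> \<in> superdiff takagi x"
  shows "\<exists>N. complementary_pairs a N"
proof -
  define K where "K = \<lceil>\<xi> - 1/2\<rceil>"
  obtain N0 where N0: "\<And>N. N \<ge> N0 \<Longrightarrow> (a (Suc N) = 0 \<longrightarrow> of_int (slope N) < \<xi> + 1/2)
      \<and> (a (Suc N) = 1 \<longrightarrow> \<xi> - 1/2 < of_int (slope N))"
    using superdiff_slope_bounds[OF nd \<xi>, of "1/2"] by (auto simp: eventually_sequentially)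
  have "\<exists>N\<ge>N0. \<forall>i. slope (N + 2 * i) = K"
  proof (rule unit_walk_trapped)
    show "\<bar>slope (Suc n) - slope n\<bar> = 1" for n
      using slope_Suc[of n] digit_cases[of n] by auto
    show "slope (Suc n) = slope n + 1" if "n \<ge> N0" "slope n < K" for n
    proof -
      have "of_int (slope n) < \<xi> - 1/2" using that(2) by (simp add: K_def less_ceiling_iff)
      then have "a (Suc n) = 0" using N0[OF that(1)] digit_cases[of n] by auto
      then show ?thesis by (simp add: slope_Suc)
    qed
    show "slope (Suc n) = slope n - 1" if "n \<ge> N0" "slope n > K" for n
    proof -
      have "\<xi> + 1/2 \<le> of_int (slope n)" using that(2) by (simp add: K_def ceiling_less_iff)
      then have "a (Suc n) = 1" using N0[OF that(1)] digit_cases[of n] by auto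
      then show ?thesis by (simp add: slope_Suc)
    qed
  qed
  then show ?thesis using complementary_pairs_if_slope_trapped by blast
qed

lemma frequently_slope_if_frequently_digit:
  assumes "complementary_pairs a N" "\<exists>\<^sub>F i in sequentially. a (N + 2 * i + 1) = b"
  shows "\<exists>\<^sub>F M in sequentially. a (Suc M) = b \<and> slope M = slope N"
  unfolding frequently_sequentially
proof
  fix M0
  obtain i where "i \<ge> M0" "a (N + 2 * i + 1) = b"
    using assms(2) unfolding frequently_sequentially by blast
  then show "\<exists>M\<ge>M0. a (Suc M) = b \<and> slope M = slope N"
    using slope_complementary_pairs[OF assms(1), of i] by (intro exI[of _ "N + 2 * i"]) auto
qed

lemma alternating_digits:
  assumes "complementary_pairs a N" "complementary_pairs a (Suc N)"
  shows "a (N + 2 * i + 1) = a (N + 1)"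
proof (induction i)
  case (Suc i)
  have "a (N + 2 * i + 1) + a (N + 2 * i + 2) = 1" "a (Suc N + 2 * i + 1) + a (Suc N + 2 * i + 2) = 1"
    using assms unfolding complementary_pairs_def by blast+
  then show ?case using Suc.IH by simp
qed simp

theorem superdiff_takagi_alternating:
  assumes nd: "x \<notin> dyadic" and pairs: "complementary_pairs a N" "complementary_pairs a (Suc N)"
  shows "superdiff takagi x = (if a (Suc N) = 0
    then {of_int (slope N) .. of_int (slope N) + 1} else {of_int (slope N) - 1 .. of_int (slope N)})"
proof -
  have max: "takagi (bin_tail a N) = 2/3" "takagi (bin_tail a (Suc N)) = 2/3"
    using pairs by (simp_all add: takagi_bin_tail_complementary_pairs)
  have pair: "a (N + 2 * i + 1) + a (N + 2 * i + 2) = 1" for i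
    using pairs(1) unfolding complementary_pairs_def by blast
  have "a (N + 2 * i + 1) = a (Suc N)" "a (Suc N + 2 * i + 1) = 1 - a (Suc N)" for i
    using alternating_digits[OF pairs, of i] pair[of i] by simp_all
  then have "\<exists>\<^sub>F i in sequentially. a (N + 2 * i + 1) = a (Suc N)"
    "\<exists>\<^sub>F i in sequentially. a (Suc N + 2 * i + 1) = 1 - a (Suc N)"
    by simp_all
  then have freq: "\<exists>\<^sub>F M in sequentially. a (Suc M) = a (Suc N) \<and> slope M = slope N"
    "\<exists>\<^sub>F M in sequentially. a (Suc M) = 1 - a (Suc N) \<and> slope M = slope (Suc N)"
    using pairs by (blast intro: frequently_slope_if_frequently_digit)+
  show ?thesis
  proof (cases "a (Suc N) = 0")
    case True
    have "superdiff takagi x = {of_int (slope N) .. of_int (slope (Suc N))}"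
      by (intro superdiff_eq_slope_Icc[OF nd max]) (use freq True in simp_all)
    then show ?thesis using True slope_Suc[of N] by simp
  next
    case False
    then have "a (Suc N) = 1" using digit_cases[of N] by simp
    moreover have "superdiff takagi x = {of_int (slope (Suc N)) .. of_int (slope N)}"
      by (intro superdiff_eq_slope_Icc[OF nd max(2,1)]) (use freq \<open>a (Suc N) = 1\<close> in simp_all)
    ultimately show ?thesis using slope_Suc[of N] by simp
  qed
qed

lemma frequently_digit_if_not_alternating:
  assumes pairs: "complementary_pairs a N"
    and not_alt: "\<not> (\<forall>\<^sub>F n in sequentially. a n + a (Suc n) = 1)" and "b \<le> 1"
  shows "\<exists>\<^sub>F i in sequentially. a (N + 2 * i + 1) = b"
proof (rule ccontr)
  assume "\<not> ?thesis"
  then obtain i0 where ne: "\<And>i. i \<ge> i0 \<Longrightarrow> a (N + 2 * i + 1) \<noteq> b"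
    by (auto simp: not_frequently eventually_sequentially)
  have i0: "a (N + 2 * i + 1) = 1 - b" if "i \<ge> i0" for i
    using ne[OF that] digit_cases[of "N + 2 * i"] \<open>b \<le> 1\<close> by auto
  have "a n + a (Suc n) = 1" if "n \<ge> N + 2 * i0 + 1" for n
  proof -
    define i where "i = (n - N - 1) div 2"
    have "i \<ge> i0" "n = N + 2 * i + 1 \<or> n = N + 2 * i + 2" using that by (auto simp: i_def)
    moreover have "a (N + 2 * i + 1) + a (N + 2 * i + 2) = 1"
      using pairs unfolding complementary_pairs_def by blast
    ultimately show ?thesis
      using i0[of i] i0[of "Suc i"] \<open>b \<le> 1\<close> by auto
  qed
  then show False
    using not_alt by (auto simp: eventually_sequentially)
qed

theorem superdiff_takagi_complementary_pairs:
  assumes nd: "x \<notin> dyadic" and pairs: "complementary_pairs a N"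
    and not_alt: "\<not> (\<forall>\<^sub>F n in sequentially. a n + a (Suc n) = 1)"
  shows "superdiff takagi x = {of_int (slope N)}"
proof -
  have max: "takagi (bin_tail a N) = 2/3"
    using pairs by (rule takagi_bin_tail_complementary_pairs)
  have "\<exists>\<^sub>F M in sequentially. a (Suc M) = b \<and> slope M = slope N" if "b \<le> 1" for b
    using frequently_digit_if_not_alternating[OF pairs not_alt that] pairs
    by (rule frequently_slope_if_frequently_digit[rotated])
  then show ?thesis
    using superdiff_eq_slope_Icc[OF nd max max] by simp
qed

end

theorem theorem2p6:
  fixes x :: real and k :: int and a :: "nat \<Rightarrow> nat"
  assumes digits: "\<forall>n\<ge>1. a n \<in> {0, 1}"
    and expansion: "x = of_int k + (\<Sum>n. real (a (Suc n)) / 2 ^ Suc n)"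
  shows "(x \<in> dyadic \<longrightarrow> superdiff takagi x = {})
    \<and> (\<forall>m\<ge>1. x \<notin> dyadic \<and> (\<forall>n\<ge>m. a n + a (Suc n) = 1) \<longrightarrow>
         superdiff takagi x =
           (let c = real m - 1 - 2 * (\<Sum>j=1..<m. real (a j))
            in if a m = 0 then (\<lambda>t. c + t) ` {0..1} else (\<lambda>t. c + t) ` {-1..0}))
    \<and> (x \<notin> dyadic \<and> \<not> (\<exists>m\<ge>1. \<forall>n\<ge>m. a n + a (Suc n) = 1) \<longrightarrow>
         (\<forall>m\<ge>1. (\<forall>i. a (m + 2 * i) + a (m + 2 * i + 1) = 1) \<longrightarrow>
            superdiff takagi x = {real m - 1 - 2 * (\<Sum>j=1..<m. real (a j))}))
    \<and> (x \<notin> dyadic \<and> \<not> (\<exists>m\<ge>1. \<forall>n\<ge>m. a n + a (Suc n) = 1)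
         \<and> \<not> (\<exists>m\<ge>1. \<forall>i. a (m + 2 * i) + a (m + 2 * i + 1) = 1) \<longrightarrow>
         superdiff takagi x = {})"
proof -
  interpret binary_expansion x k a using digits expansion by unfold_locales
  have slope_eq: "real (Suc N) - 1 - 2 * (\<Sum>j=1..<Suc N. real (a j)) = of_int (slope N)" for N
    by (simp add: slope_eq_digit_sum atLeastLessThanSuc_atLeastAtMost)
  have pairs: "(\<forall>i. a (Suc N + 2 * i) + a (Suc N + 2 * i + 1) = 1) \<longleftrightarrow> complementary_pairs a N" for N
    by (simp add: complementary_pairs_def)
  have Suc_iff: "(\<forall>m\<ge>1. P m) \<longleftrightarrow> (\<forall>N. P (Suc N))" "(\<exists>m\<ge>1. P m) \<longleftrightarrow> (\<exists>N. P (Suc N))"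
    for P :: "nat \<Rightarrow> bool"
    by (auto dest!: Suc_le_D)
  have "superdiff takagi x = (let c = real (Suc N) - 1 - 2 * (\<Sum>j=1..<Suc N. real (a j))
      in if a (Suc N) = 0 then (\<lambda>t. c + t) ` {0..1} else (\<lambda>t. c + t) ` {-1..0})"
    if "x \<notin> dyadic" "\<forall>n\<ge>Suc N. a n + a (Suc n) = 1" for N
    using superdiff_takagi_alternating[OF that(1), of N] that(2)
    unfolding alternating_iff_complementary_pairs slope_eq Let_def by (simp add: add.commute)
  then show ?thesis
    unfolding eventually_sequentially_ge_one Suc_iff pairs slope_eq
    using superdiff_takagi_dyadic superdiff_takagi_complementary_pairs complementary_pairs_if_superdiff
    by blast
qed

end
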